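(* Let $n \ge 1$ (the number of clients in a secure-aggregation shard), $d\ge 1$, $m \ge 2$ be integers, and let $\varepsilon>0$, $\Delta>0$. Set $\alpha = 1/n$ and $\beta = e^{-\varepsilon/\Delta}$. For each input tuple $v=(v_1,\dots,v_n)$ of integer vectors $v_i\in\mathbb{Z}^d$, define the randomized mechanism $$\mathcal{M}(v) = \left(\sum_{i=1}^{n} \big( (v_i + X_i - Y_i) \bmod m\big)\right) \bmod m \;\in\; \mathbb{Z}_m^d,$$ where all $X_i, Y_i\in\mathbb{Z}_{\ge 0}^d$ have mutually independent coordinates, each distributed as Pólya$(\alpha,\beta)$, independent of the input, and "$\bmod\ m$" is applied entrywise. Call two input tuples $v, v'$ neighboring if they differ in exactly one index $j$ and $\|v_j - v'_j\|_1 \le \Delta$. Then $\mathcal{M}$ is $\varepsilon$-differentially private: for all neighboring $v,v'$ and every set $S\subseteq \mathbb{Z}_m^d$, $\Pr[\mathcal{M}(v)\in S]\le e^{\varepsilon}\Pr[\mathcal{M}(v')\in S]$.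
   Context: A random variable $X$ is Pólya$(\alpha,\beta)$ with $\alpha>0$, $\beta\in(0,1)$ if $X$ takes values in $\mathbb{Z}_{\ge 0}$ with $P(X=k) = \binom{\alpha+k-1}{\alpha-1}\beta^k(1-\beta)^\alpha$, where the generalized binomial coefficient is defined via Gamma functions, $\binom{\alpha+k-1}{\alpha-1} = \frac{\Gamma(\alpha+k)}{\Gamma(\alpha)\,k!}$. Equivalently, $X$ is obtained by drawing $\lambda\sim\mathrm{Gamma}(\alpha,\beta/(1-\beta))$ (shape $\alpha$, scale $\beta/(1-\beta)$) and then $X\sim\mathrm{Poisson}(\lambda)$. For an integer $a$, $a \bmod m$ denotes the representative in $\{0,\dots,m-1\}$. *)

theory Defs
  imports "HOL-Probability.Probability"
begin

definition polya_pmf :: "real \<Rightarrow> real \<Rightarrow> nat pmf" where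
  "polya_pmf \<alpha> \<beta> = embed_pmf (\<lambda>k. Gamma (\<alpha> + real k) / (Gamma \<alpha> * fact k)
                                       * \<beta> ^ k * (1 - \<beta>) powr \<alpha>)"

text \<open>Inputs: v i k is coordinate k (k < d) of the vector of client i (i < n).
  Outputs: vectors in Z_m^d represented as functions nat => int with values in
  {0..m-1} at coordinates k < d and 0 elsewhere.\<close>
definition secagg_mech ::
  "nat \<Rightarrow> nat \<Rightarrow> int \<Rightarrow> real \<Rightarrow> real \<Rightarrow> (nat \<Rightarrow> nat \<Rightarrow> int) \<Rightarrow> (nat \<Rightarrow> int) pmf" where
  "secagg_mech n d m \<alpha> \<beta> v =
     map_pmf (\<lambda>(X, Y). \<lambda>k. if k < d then
                 (\<Sum>i<n. (v i k + int (X (i, k)) - int (Y (i, k))) mod m) mod m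
               else 0)
       (pair_pmf (Pi_pmf ({..<n} \<times> {..<d}) 0 (\<lambda>_. polya_pmf \<alpha> \<beta>))
                 (Pi_pmf ({..<n} \<times> {..<d}) 0 (\<lambda>_. polya_pmf \<alpha> \<beta>)))"

definition neighboring ::
  "nat \<Rightarrow> nat \<Rightarrow> real \<Rightarrow> (nat \<Rightarrow> nat \<Rightarrow> int) \<Rightarrow> (nat \<Rightarrow> nat \<Rightarrow> int) \<Rightarrow> bool" where
  "neighboring n d \<Delta> v v' \<longleftrightarrow>
     (\<exists>j<n. (\<exists>k<d. v j k \<noteq> v' j k) \<and>
            (\<forall>i<n. i \<noteq> j \<longrightarrow> (\<forall>k<d. v i k = v' i k)) \<and>
            real_of_int (\<Sum>k<d. \<bar>v j k - v' j k\<bar>) \<le> \<Delta>)"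

end

(*
  A sum of n independent Polya(1/n, beta) variables is Polya(1, beta), i.e. geometric: the Polya
  weights are the coefficients of (1 - beta z) powr (- alpha), so the shape parameters add under
  convolution (Vandermonde).  Hence coordinate k of the mechanism is (s_k + G - G') mod m, where
  s_k is the k-th coordinate of the sum of the inputs and G, G' are independent geometric
  variables.  The difference G - G' is discrete Laplace noise with weights proportional to
  beta ^ |z|, so shifting it by a changes every weight by a factor at most beta ^ (- |a|), and
  reducing mod m cannot increase this ratio.  Neighbouring inputs shift the vector s by at most
  Delta in l1-norm, and the coordinates are independent, so the total factor is at most
  beta ^ (- Delta) = exp epsilon.
*)
theory Submission
  imports Defs "HOL-Computational_Algebra.Formal_Power_Series"
begin

section \<open>Polya distributions\<close>

lemma pochhammer_div_fact_eq_gbinomial: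
  "pochhammer (a :: 'a :: field_char_0) k / fact k = (-1) ^ k * ((- a) gchoose k)"
  by (simp add: gbinomial_pochhammer)

lemma pmf_polya_pmf:
  assumes "\<alpha> > 0" and "0 < \<beta>" and "\<beta> < 1"
  shows "pmf (polya_pmf \<alpha> \<beta>) k = pochhammer \<alpha> k / fact k * \<beta> ^ k * (1 - \<beta>) powr \<alpha>"
proof -
  define w where "w k = pochhammer \<alpha> k / fact k * \<beta> ^ k * (1 - \<beta>) powr \<alpha>" for k
  have Gamma_eq: "Gamma (\<alpha> + real k) / (Gamma \<alpha> * fact k) * \<beta> ^ k * (1 - \<beta>) powr \<alpha> = w k" for k
  proof -
    have "\<alpha> \<notin> \<int>\<^sub>\<le>\<^sub>0"
      using assms(1) by (auto elim!: nonpos_Ints_cases)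
    then show ?thesis
      by (simp add: w_def pochhammer_Gamma)
  qed
  have nonneg: "0 \<le> w k" for k
    unfolding w_def using assms by (intro mult_nonneg_nonneg divide_nonneg_nonneg pochhammer_nonneg) auto
  have "(\<lambda>k. ((- \<alpha>) gchoose k) * (- \<beta>) ^ k) sums (1 + (- \<beta>)) powr (- \<alpha>)"
    using assms by (intro gen_binomial_real) auto
  moreover have "((- \<alpha>) gchoose k) * (- \<beta>) ^ k = pochhammer \<alpha> k / fact k * \<beta> ^ k" for k
    by (simp add: pochhammer_div_fact_eq_gbinomial power_minus[of \<beta>])
  ultimately have "(\<lambda>k. pochhammer \<alpha> k / fact k * \<beta> ^ k) sums (1 - \<beta>) powr (- \<alpha>)"
    by simp
  then have "w sums ((1 - \<beta>) powr (- \<alpha>) * (1 - \<beta>) powr \<alpha>)"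
    unfolding w_def by (rule sums_mult2)
  then have w_sums: "w sums 1"
    using assms by (simp add: powr_minus)
  have "(\<integral>\<^sup>+k. ennreal (w k) \<partial>count_space UNIV) = 1"
    unfolding nn_integral_count_space_nat
    using suminf_ennreal2[OF nonneg sums_summable[OF w_sums]] sums_unique[OF w_sums] by simp
  then show ?thesis
    unfolding polya_pmf_def Gamma_eq using nonneg by (subst pmf_embed_pmf) (auto simp: w_def)
qed

lemma pmf_polya_pmf_1:
  assumes "0 < \<beta>" and "\<beta> < 1"
  shows "pmf (polya_pmf 1 \<beta>) k = (1 - \<beta>) * \<beta> ^ k"
  using assms by (simp add: pmf_polya_pmf pochhammer_fact[symmetric])

lemma polya_pmf_convolution:
  assumes "\<alpha> > 0" and "\<gamma> > 0" and "0 < \<beta>" and "\<beta> < 1"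
  shows "map_pmf (\<lambda>(x, y). x + y) (pair_pmf (polya_pmf \<alpha> \<beta>) (polya_pmf \<gamma> \<beta>))
         = polya_pmf (\<alpha> + \<gamma>) \<beta>"
proof (rule pmf_eqI)
  fix k :: nat
  let ?c = "(-1) ^ k * \<beta> ^ k * (1 - \<beta>) powr (\<alpha> + \<gamma>)"
  have "(\<lambda>(x, y). x + y) -` {k} = (\<lambda>a. (a, k - a)) ` {0..k}"
    by (auto simp: image_iff)
  then have "pmf (map_pmf (\<lambda>(x, y). x + y) (pair_pmf (polya_pmf \<alpha> \<beta>) (polya_pmf \<gamma> \<beta>))) k
      = (\<Sum>a\<in>{0..k}. pmf (polya_pmf \<alpha> \<beta>) a * pmf (polya_pmf \<gamma> \<beta>) (k - a))"
    unfolding pmf_map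
    by (subst measure_measure_pmf_finite) (auto simp: sum.reindex inj_on_def pmf_pair)
  also have "\<dots> = (\<Sum>a\<in>{0..k}. ((- \<alpha>) gchoose a) * ((- \<gamma>) gchoose (k - a))) * ?c"
    unfolding sum_distrib_right
  proof (rule sum.cong[OF refl])
    fix a assume "a \<in> {0..k}"
    then have k: "k = a + (k - a)"
      by auto
    have "(-1 :: real) ^ k = (-1) ^ a * (-1) ^ (k - a)" and "\<beta> ^ k = \<beta> ^ a * \<beta> ^ (k - a)"
      by (subst k, simp only: power_add)+
    moreover have "(1 - \<beta>) powr (\<alpha> + \<gamma>) = (1 - \<beta>) powr \<alpha> * (1 - \<beta>) powr \<gamma>"
      by (simp add: powr_add)
    ultimately show "pmf (polya_pmf \<alpha> \<beta>) a * pmf (polya_pmf \<gamma> \<beta>) (k - a)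
        = ((- \<alpha>) gchoose a) * ((- \<gamma>) gchoose (k - a)) * ?c"
      using assms by (simp add: pmf_polya_pmf pochhammer_div_fact_eq_gbinomial algebra_simps)
  qed
  also have "\<dots> = pmf (polya_pmf (\<alpha> + \<gamma>) \<beta>) k"
    using assms
    by (simp add: gbinomial_Vandermonde pmf_polya_pmf pochhammer_div_fact_eq_gbinomial algebra_simps)
  finally show "pmf (map_pmf (\<lambda>(x, y). x + y) (pair_pmf (polya_pmf \<alpha> \<beta>) (polya_pmf \<gamma> \<beta>))) k
      = pmf (polya_pmf (\<alpha> + \<gamma>) \<beta>) k" .
qed

lemma polya_pmf_sum_Pi_pmf:
  assumes "finite I" and "I \<noteq> {}" and "\<alpha> > 0" and "0 < \<beta>" and "\<beta> < 1"
  shows "map_pmf (\<lambda>X. \<Sum>i\<in>I. X i) (Pi_pmf I 0 (\<lambda>_. polya_pmf \<alpha> \<beta>))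
         = polya_pmf (real (card I) * \<alpha>) \<beta>"
  using assms(1,2)
proof (induction I rule: finite_ne_induct)
  case (singleton x)
  show ?case
    by (simp add: Pi_pmf_singleton pmf.map_comp o_def)
next
  case (insert x F)
  let ?P = "polya_pmf \<alpha> \<beta>"
  have "map_pmf (\<lambda>X. \<Sum>i\<in>insert x F. X i) (Pi_pmf (insert x F) 0 (\<lambda>_. ?P))
      = map_pmf (\<lambda>(y, z). y + z)
          (map_pmf (\<lambda>(y, X). (id y, \<Sum>i\<in>F. X i)) (pair_pmf ?P (Pi_pmf F 0 (\<lambda>_. ?P))))"
    using insert.hyps
    by (subst Pi_pmf_insert)
       (auto simp: pmf.map_comp o_def case_prod_unfold intro!: map_pmf_cong sum.cong)
  also have "\<dots> = map_pmf (\<lambda>(y, z). y + z) (pair_pmf ?P (polya_pmf (real (card F) * \<alpha>) \<beta>))"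
    unfolding map_pair insert.IH by simp
  also have "\<dots> = polya_pmf (\<alpha> + real (card F) * \<alpha>) \<beta>"
    using insert.hyps assms by (intro polya_pmf_convolution) (auto simp: card_gt_0_iff)
  also have "\<alpha> + real (card F) * \<alpha> = real (card (insert x F)) * \<alpha>"
    using insert.hyps by (simp add: algebra_simps)
  finally show ?case .
qed

section \<open>The discrete Laplace distribution\<close>

definition discrete_laplace_pmf :: "real \<Rightarrow> int pmf" where
  "discrete_laplace_pmf \<beta> =
     map_pmf (\<lambda>(x, y). int x - int y) (pair_pmf (polya_pmf 1 \<beta>) (polya_pmf 1 \<beta>))"

lemma pmf_discrete_laplace_pmf_neg:
  "pmf (discrete_laplace_pmf \<beta>) (- z) = pmf (discrete_laplace_pmf \<beta>) z"
proof -
  have "discrete_laplace_pmf \<beta> = map_pmf uminus (discrete_laplace_pmf \<beta>)"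
    unfolding discrete_laplace_pmf_def
    by (subst pair_commute_pmf) (simp add: pmf.map_comp o_def case_prod_unfold)
  then have "pmf (discrete_laplace_pmf \<beta>) (- z) = pmf (map_pmf uminus (discrete_laplace_pmf \<beta>)) (- z)"
    by simp
  also have "\<dots> = pmf (discrete_laplace_pmf \<beta>) z"
    by (rule pmf_map_inj') (simp add: inj_def)
  finally show ?thesis .
qed

lemma pmf_discrete_laplace_pmf_nonpos:
  assumes "0 < \<beta>" and "\<beta> < 1" and "z \<le> 0"
  shows "pmf (discrete_laplace_pmf \<beta>) z = \<beta> ^ nat (- z) * pmf (discrete_laplace_pmf \<beta>) 0"
proof -
  let ?G = "polya_pmf 1 \<beta>"
  have pmf_minus: "pmf (map_pmf (\<lambda>y. int x - int y) ?G) w = pmf ?G (nat (int x - w))"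
    if "w \<le> 0" for x w
  proof -
    have "(\<lambda>y. int x - int y) -` {w} = {nat (int x - w)}"
      using that by auto
    then show ?thesis
      by (simp add: pmf_map measure_pmf_single)
  qed
  have exponent: "nat (int x - z) = x + nat (- z)" for x
    using assms(3) by auto
  have laplace_as_bind: "discrete_laplace_pmf \<beta> = bind_pmf ?G (\<lambda>x. map_pmf (\<lambda>y. int x - int y) ?G)"
    unfolding discrete_laplace_pmf_def pair_pmf_def map_bind_pmf
    by (simp add: map_pmf_def[symmetric] pmf.map_comp o_def)
  \<comment> \<open>memorylessness of the geometric distribution: P(G' = x + |z|) = beta ^ |z| * P(G' = x)\<close>
  have "pmf (discrete_laplace_pmf \<beta>) z = (\<integral>x. \<beta> ^ nat (- z) * pmf ?G x \<partial>?G)"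
    unfolding laplace_as_bind pmf_bind pmf_minus[OF assms(3)] using assms
    by (intro Bochner_Integration.integral_cong refl)
       (auto simp: pmf_polya_pmf_1 exponent power_add)
  also have "\<dots> = \<beta> ^ nat (- z) * (\<integral>x. pmf ?G x \<partial>?G)"
    by (rule integral_mult_right_zero)
  also have "(\<integral>x. pmf ?G x \<partial>?G) = pmf (discrete_laplace_pmf \<beta>) 0"
    unfolding laplace_as_bind pmf_bind pmf_minus[OF order_refl] by simp
  finally show ?thesis .
qed

lemma pmf_discrete_laplace_pmf:
  assumes "0 < \<beta>" and "\<beta> < 1"
  shows "pmf (discrete_laplace_pmf \<beta>) z = \<beta> ^ nat \<bar>z\<bar> * pmf (discrete_laplace_pmf \<beta>) 0"
proof (cases "z \<le> 0")
  case True
  then show ?thesis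
    using pmf_discrete_laplace_pmf_nonpos[OF assms True] by simp
next
  case False
  then show ?thesis
    using pmf_discrete_laplace_pmf_nonpos[OF assms, of "- z"] pmf_discrete_laplace_pmf_neg[of \<beta> z]
    by simp
qed

lemma pmf_discrete_laplace_pmf_shift_le:
  assumes "t > 0"
  shows "pmf (discrete_laplace_pmf (exp (- t))) (u - a)
         \<le> exp (t * \<bar>real_of_int (a - b)\<bar>) * pmf (discrete_laplace_pmf (exp (- t))) (u - b)"
proof -
  let ?L = "discrete_laplace_pmf (exp (- t))"
  have weight: "pmf ?L z = exp (- t * \<bar>real_of_int z\<bar>) * pmf ?L 0" for z
    using assms pmf_discrete_laplace_pmf[of "exp (- t)" z]
    by (simp add: exp_of_nat_mult[symmetric] mult.commute)
  have "\<bar>real_of_int (u - b)\<bar> \<le> \<bar>real_of_int (u - a)\<bar> + \<bar>real_of_int (a - b)\<bar>"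
    by linarith
  then have "t * \<bar>real_of_int (u - b)\<bar> \<le> t * (\<bar>real_of_int (u - a)\<bar> + \<bar>real_of_int (a - b)\<bar>)"
    using assms by (intro mult_left_mono) auto
  then have "exp (- t * \<bar>real_of_int (u - a)\<bar>)
      \<le> exp (t * \<bar>real_of_int (a - b)\<bar>) * exp (- t * \<bar>real_of_int (u - b)\<bar>)"
    by (simp add: exp_add[symmetric] algebra_simps)
  from mult_right_mono[OF this pmf_nonneg[of ?L 0]] show ?thesis
    unfolding weight[of "u - a"] weight[of "u - b"] by (simp add: mult.assoc)
qed

section \<open>Products of probability mass functions\<close>

lemma prob_le_if_pmf_le:
  assumes "\<And>x. pmf p x \<le> c * pmf q x" and "c \<ge> 0"
  shows "measure_pmf.prob p S \<le> c * measure_pmf.prob q S"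
proof -
  have "emeasure (measure_pmf p) S = (\<integral>\<^sup>+x. ennreal (pmf p x) * indicator S x \<partial>count_space UNIV)"
    by (simp add: nn_integral_measure_pmf[symmetric])
  also have "\<dots> \<le> (\<integral>\<^sup>+x. ennreal c * (ennreal (pmf q x) * indicator S x) \<partial>count_space UNIV)"
    using assms by (intro nn_integral_mono) (auto simp: ennreal_mult[symmetric] split: split_indicator)
  also have "\<dots> = ennreal c * (\<integral>\<^sup>+x. ennreal (pmf q x) * indicator S x \<partial>count_space UNIV)"
    by (rule nn_integral_cmult) auto
  also have "(\<integral>\<^sup>+x. ennreal (pmf q x) * indicator S x \<partial>count_space UNIV) = emeasure (measure_pmf q) S"
    by (simp add: nn_integral_measure_pmf[symmetric])
  finally have "ennreal (measure_pmf.prob p S) \<le> ennreal (c * measure_pmf.prob q S)"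
    using assms(2) by (simp add: measure_pmf.emeasure_eq_measure ennreal_mult)
  then show ?thesis
    using assms(2) by (simp add: ennreal_le_iff)
qed

lemma pmf_map_pmf_le_if_pmf_le:
  assumes "\<And>x. pmf p x \<le> c * pmf q x" and "c \<ge> 0"
  shows "pmf (map_pmf f p) y \<le> c * pmf (map_pmf f q) y"
  unfolding pmf_map by (rule prob_le_if_pmf_le[OF assms])

lemma pmf_Pi_pmf_le_if_pmf_le:
  assumes "finite A" and "\<And>k x. k \<in> A \<Longrightarrow> pmf (p k) x \<le> c k * pmf (q k) x"
    and "\<And>k. k \<in> A \<Longrightarrow> c k \<ge> 0"
  shows "pmf (Pi_pmf A dflt p) f \<le> (\<Prod>k\<in>A. c k) * pmf (Pi_pmf A dflt q) f"
proof (cases "\<forall>x. x \<notin> A \<longrightarrow> f x = dflt")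
  case True
  have "(\<Prod>k\<in>A. pmf (p k) (f k)) \<le> (\<Prod>k\<in>A. c k * pmf (q k) (f k))"
    using assms by (intro prod_mono) auto
  then show ?thesis
    using True assms(1) by (simp add: pmf_Pi prod.distrib)
qed (use assms(1) in \<open>auto simp: pmf_Pi\<close>)

lemma Pi_pmf_pair:
  assumes "finite A"
  shows "map_pmf (\<lambda>(f, g) k. (f k, g k)) (pair_pmf (Pi_pmf A a p) (Pi_pmf A b q))
         = Pi_pmf A (a, b) (\<lambda>k. pair_pmf (p k) (q k))"
proof (rule pmf_eqI)
  fix F :: "'a \<Rightarrow> 'b \<times> 'c"
  let ?zip = "\<lambda>(f :: 'a \<Rightarrow> 'b, g :: 'a \<Rightarrow> 'c) k. (f k, g k)"
  have "pmf (map_pmf ?zip (pair_pmf (Pi_pmf A a p) (Pi_pmf A b q))) (?zip (fst \<circ> F, snd \<circ> F))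
      = pmf (pair_pmf (Pi_pmf A a p) (Pi_pmf A b q)) (fst \<circ> F, snd \<circ> F)"
    by (rule pmf_map_inj') (auto simp: inj_def fun_eq_iff)
  also have "\<dots> = pmf (Pi_pmf A (a, b) (\<lambda>k. pair_pmf (p k) (q k))) F"
  proof -
    have "(\<forall>x. x \<notin> A \<longrightarrow> F x = (a, b))
        \<longleftrightarrow> (\<forall>x. x \<notin> A \<longrightarrow> fst (F x) = a) \<and> (\<forall>x. x \<notin> A \<longrightarrow> snd (F x) = b)"
      by (metis prod.collapse fst_conv snd_conv)
    moreover have "pmf (pair_pmf (p k) (q k)) (F k) = pmf (p k) (fst (F k)) * pmf (q k) (snd (F k))" for k
      by (metis pmf_pair prod.collapse)
    ultimately show ?thesis
      unfolding pmf_pair pmf_Pi[OF assms] by (auto simp: prod.distrib)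
  qed
  finally show "pmf (map_pmf ?zip (pair_pmf (Pi_pmf A a p) (Pi_pmf A b q))) F
      = pmf (Pi_pmf A (a, b) (\<lambda>k. pair_pmf (p k) (q k))) F"
    by simp
qed

lemma Pi_pmf_Times_curry:
  assumes A: "finite A" and B: "finite B"
  shows "map_pmf (\<lambda>X k i. X (i, k)) (Pi_pmf (A \<times> B) dflt (\<lambda>_. p))
         = Pi_pmf B (\<lambda>_. dflt) (\<lambda>_. Pi_pmf A dflt (\<lambda>_. p))"
proof (rule pmf_eqI)
  fix F :: "'b \<Rightarrow> 'a \<Rightarrow> 'c"
  let ?curry = "\<lambda>X k i. X (i, k)"
  have "pmf (map_pmf ?curry (Pi_pmf (A \<times> B) dflt (\<lambda>_. p))) (?curry (\<lambda>(i, k). F k i))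
      = pmf (Pi_pmf (A \<times> B) dflt (\<lambda>_. p)) (\<lambda>(i, k). F k i)"
    by (rule pmf_map_inj') (auto simp: inj_def fun_eq_iff)
  also have "\<dots> = pmf (Pi_pmf B (\<lambda>_. dflt) (\<lambda>_. Pi_pmf A dflt (\<lambda>_. p))) F"
  proof (cases "\<forall>x. x \<notin> A \<times> B \<longrightarrow> (\<lambda>(i, k). F k i) x = dflt")
    case True
    then have outside_B: "\<forall>k. k \<notin> B \<longrightarrow> F k = (\<lambda>_. dflt)"
      and outside_A: "\<forall>k\<in>B. \<forall>i. i \<notin> A \<longrightarrow> F k i = dflt"
      by (auto simp: fun_eq_iff)
    have "(\<Prod>x\<in>A \<times> B. pmf p ((\<lambda>(i, k). F k i) x)) = (\<Prod>i\<in>A. \<Prod>k\<in>B. pmf p (F k i))"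
      by (simp add: prod.cartesian_product case_prod_unfold)
    also have "\<dots> = (\<Prod>k\<in>B. \<Prod>i\<in>A. pmf p (F k i))"
      by (rule prod.swap)
    moreover have "pmf (Pi_pmf A dflt (\<lambda>_. p)) (F k) = (\<Prod>i\<in>A. pmf p (F k i))" if "k \<in> B" for k
      using outside_A that by (intro pmf_Pi' A) auto
    ultimately show ?thesis
      using True outside_B by (subst (1 2) pmf_Pi) (auto simp: A B intro!: prod.cong)
  next
    case False
    then obtain i k where ik: "(i, k) \<notin> A \<times> B" "F k i \<noteq> dflt"
      by auto
    show ?thesis
    proof (cases "k \<in> B")
      case True
      with ik have "pmf (Pi_pmf A dflt (\<lambda>_. p)) (F k) = 0"
        by (intro pmf_Pi_outside A) auto
      then have "(\<Prod>k\<in>B. pmf (Pi_pmf A dflt (\<lambda>_. p)) (F k)) = 0"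
        using True B by (intro prod_zero) auto
      then show ?thesis
        using False by (subst (1 2) pmf_Pi) (auto simp: A B)
    next
      case False
      with ik have "\<exists>k. k \<notin> B \<and> F k \<noteq> (\<lambda>_. dflt)"
        by auto
      then show ?thesis
        using \<open>\<not> (\<forall>x. x \<notin> A \<times> B \<longrightarrow> _)\<close> by (subst (1 2) pmf_Pi) (auto simp: A B)
    qed
  qed
  finally show "pmf (map_pmf ?curry (Pi_pmf (A \<times> B) dflt (\<lambda>_. p))) F
      = pmf (Pi_pmf B (\<lambda>_. dflt) (\<lambda>_. Pi_pmf A dflt (\<lambda>_. p))) F"
    by simp
qed

lemma Pi_pmf_map_indexed:
  assumes "finite A"
  shows "map_pmf (\<lambda>C k. if k \<in> A then g k (C k) else dflt) (Pi_pmf A dflt' p)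
         = Pi_pmf A dflt (\<lambda>k. map_pmf (g k) (p k))"
  using assms unfolding map_pmf_def by (subst Pi_pmf_bind[where d' = dflt']) auto

lemma map_pmf_pair_Pi_pmf:
  assumes "finite A"
  shows "map_pmf (\<lambda>(f, g) k. if k \<in> A then h k (f k) (g k) else dflt)
           (pair_pmf (Pi_pmf A a p) (Pi_pmf A b q))
         = Pi_pmf A dflt (\<lambda>k. map_pmf (\<lambda>(x, y). h k x y) (pair_pmf (p k) (q k)))"
proof -
  have "map_pmf (\<lambda>(f, g) k. if k \<in> A then h k (f k) (g k) else dflt)
          (pair_pmf (Pi_pmf A a p) (Pi_pmf A b q))
      = map_pmf (\<lambda>C k. if k \<in> A then (\<lambda>(x, y). h k x y) (C k) else dflt)
          (map_pmf (\<lambda>(f, g) k. (f k, g k)) (pair_pmf (Pi_pmf A a p) (Pi_pmf A b q)))"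
    by (auto simp: pmf.map_comp o_def case_prod_unfold fun_eq_iff intro!: map_pmf_cong)
  also have "\<dots> = Pi_pmf A dflt (\<lambda>k. map_pmf (\<lambda>(x, y). h k x y) (pair_pmf (p k) (q k)))"
    unfolding Pi_pmf_pair[OF assms] by (rule Pi_pmf_map_indexed[OF assms])
  finally show ?thesis .
qed

lemma Pi_pmf_column_sums:
  fixes n d :: nat
  shows "map_pmf (\<lambda>X k. \<Sum>i<n. X (i, k)) (Pi_pmf ({..<n} \<times> {..<d}) 0 (\<lambda>_. p))
   = Pi_pmf {..<d} 0 (\<lambda>_. map_pmf (\<lambda>g. \<Sum>i<n. g i) (Pi_pmf {..<n} 0 (\<lambda>_. p)))"
proof -
  let ?P = "Pi_pmf ({..<n} \<times> {..<d}) 0 (\<lambda>_. p)"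
  have "map_pmf (\<lambda>X k. \<Sum>i<n. X (i, k)) ?P
      = map_pmf (\<lambda>F k. if k \<in> {..<d} then (\<lambda>g. \<Sum>i<n. g i) (F k) else 0)
          (map_pmf (\<lambda>X k i. X (i, k)) ?P)"
    unfolding pmf.map_comp o_def
  proof (intro map_pmf_cong refl ext)
    fix X k
    assume "X \<in> set_pmf ?P"
    moreover have "set_pmf ?P \<subseteq> {f. \<forall>x. x \<notin> {..<n} \<times> {..<d} \<longrightarrow> f x = 0}"
      by (rule set_Pi_pmf_subset) simp
    ultimately have "\<forall>x. x \<notin> {..<n} \<times> {..<d} \<longrightarrow> X x = 0"
      by blast
    then show "(\<Sum>i<n. X (i, k)) = (if k \<in> {..<d} then \<Sum>i<n. X (i, k) else 0)"
      by auto
  qed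
  also have "\<dots> = Pi_pmf {..<d} 0 (\<lambda>_. map_pmf (\<lambda>g. \<Sum>i<n. g i) (Pi_pmf {..<n} 0 (\<lambda>_. p)))"
    by (subst Pi_pmf_Times_curry; (rule Pi_pmf_map_indexed)?; simp)
  finally show ?thesis .
qed

section \<open>The secure aggregation mechanism\<close>

lemma secagg_mech_eq_Pi_pmf:
  assumes "n \<ge> 1" and "0 < \<beta>" and "\<beta> < 1"
  shows "secagg_mech n d m (1 / real n) \<beta> v
         = Pi_pmf {..<d} 0 (\<lambda>k. map_pmf (\<lambda>z. ((\<Sum>i<n. v i k) + z) mod m) (discrete_laplace_pmf \<beta>))"
proof -
  let ?P = "Pi_pmf ({..<n} \<times> {..<d}) 0 (\<lambda>_. polya_pmf (1 / real n) \<beta>)"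
  let ?G = "polya_pmf 1 \<beta>"
  let ?colsum = "\<lambda>X k. \<Sum>i<n. X (i, k)"
  let ?s = "\<lambda>k. \<Sum>i<n. v i k"
  define out where "out = (\<lambda>(A :: nat \<Rightarrow> nat, B :: nat \<Rightarrow> nat) k.
    if k \<in> {..<d} then (?s k + int (A k) - int (B k)) mod m else 0)"
  have column_sums_geometric: "map_pmf ?colsum ?P = Pi_pmf {..<d} 0 (\<lambda>_. ?G)"
  proof -
    have "map_pmf (\<lambda>g. \<Sum>i<n. g i) (Pi_pmf {..<n} 0 (\<lambda>_. polya_pmf (1 / real n) \<beta>)) = ?G"
      using polya_pmf_sum_Pi_pmf[of "{..<n}" "1 / real n" \<beta>] assms by (auto simp: lessThan_empty_iff)
    then show ?thesis
      by (simp add: Pi_pmf_column_sums)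
  qed
  have "secagg_mech n d m (1 / real n) \<beta> v
      = map_pmf out (map_pmf (\<lambda>(X, Y). (?colsum X, ?colsum Y)) (pair_pmf ?P ?P))"
    unfolding secagg_mech_def pmf.map_comp o_def
  proof (intro map_pmf_cong refl)
    fix XY :: "(nat \<times> nat \<Rightarrow> nat) \<times> (nat \<times> nat \<Rightarrow> nat)"
    obtain X Y where XY: "XY = (X, Y)"
      by (cases XY)
    have "(\<Sum>i<n. (v i k + int (X (i, k)) - int (Y (i, k))) mod m) mod m
        = (?s k + int (?colsum X k) - int (?colsum Y k)) mod m" for k
      by (simp add: mod_sum_eq sum.distrib sum_subtractf)
    then show "(case XY of (X, Y) \<Rightarrow> \<lambda>k. if k < d
          then (\<Sum>i<n. (v i k + int (X (i, k)) - int (Y (i, k))) mod m) mod m else 0)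
        = out (case XY of (X, Y) \<Rightarrow> (?colsum X, ?colsum Y))"
      by (simp add: XY out_def fun_eq_iff)
  qed
  also have "\<dots> = map_pmf out (pair_pmf (Pi_pmf {..<d} 0 (\<lambda>_. ?G)) (Pi_pmf {..<d} 0 (\<lambda>_. ?G)))"
    unfolding map_pair column_sums_geometric ..
  also have "\<dots> = Pi_pmf {..<d} 0
      (\<lambda>k. map_pmf (\<lambda>(x, y). (?s k + int x - int y) mod m) (pair_pmf ?G ?G))"
    unfolding out_def by (rule map_pmf_pair_Pi_pmf) simp
  also have "\<dots> = Pi_pmf {..<d} 0 (\<lambda>k. map_pmf (\<lambda>z. (?s k + z) mod m) (discrete_laplace_pmf \<beta>))"
    unfolding discrete_laplace_pmf_def pmf.map_comp o_def
    by (intro Pi_pmf_cong refl) (simp add: case_prod_unfold algebra_simps)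
  finally show ?thesis .
qed

lemma pmf_shifted_mod_le:
  assumes "t > 0"
  shows "pmf (map_pmf (\<lambda>z. (a + z) mod m) (discrete_laplace_pmf (exp (- t)))) r
         \<le> exp (t * \<bar>real_of_int (a - b)\<bar>)
            * pmf (map_pmf (\<lambda>z. (b + z) mod m) (discrete_laplace_pmf (exp (- t)))) r"
proof -
  have shift: "map_pmf (\<lambda>z. (c + z) mod m) (discrete_laplace_pmf (exp (- t)))
      = map_pmf (\<lambda>w. w mod m) (map_pmf (\<lambda>z. c + z) (discrete_laplace_pmf (exp (- t))))" for c
    by (simp add: pmf.map_comp o_def)
  have "pmf (map_pmf (\<lambda>z. c + z) (discrete_laplace_pmf (exp (- t)))) u
      = pmf (discrete_laplace_pmf (exp (- t))) (u - c)" for c u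
    using pmf_map_inj'[of "\<lambda>z. c + z" _ "u - c"] by (simp add: inj_def)
  then show ?thesis
    unfolding shift using pmf_discrete_laplace_pmf_shift_le[OF assms]
    by (intro pmf_map_pmf_le_if_pmf_le) auto
qed

lemma neighboring_column_sums_dist:
  assumes "neighboring n d \<Delta> v v'"
  shows "(\<Sum>k<d. \<bar>real_of_int ((\<Sum>i<n. v i k) - (\<Sum>i<n. v' i k))\<bar>) \<le> \<Delta>"
proof -
  obtain j where j: "j < n" "\<forall>i<n. i \<noteq> j \<longrightarrow> (\<forall>k<d. v i k = v' i k)"
    and dist: "real_of_int (\<Sum>k<d. \<bar>v j k - v' j k\<bar>) \<le> \<Delta>"
    using assms unfolding neighboring_def by blast
  have "(\<Sum>i<n. v i k) - (\<Sum>i<n. v' i k) = v j k - v' j k" if "k < d" for k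
  proof -
    have "(\<Sum>i<n. v i k) - (\<Sum>i<n. v' i k) = (\<Sum>i<n. v i k - v' i k)"
      by (simp add: sum_subtractf)
    also have "\<dots> = (v j k - v' j k) + (\<Sum>i\<in>{..<n} - {j}. v i k - v' i k)"
      using j(1) by (subst sum.remove[of _ j]) auto
    also have "(\<Sum>i\<in>{..<n} - {j}. v i k - v' i k) = 0"
      using j(2) that by (intro sum.neutral) auto
    finally show ?thesis
      by simp
  qed
  then show ?thesis
    using dist by simp
qed

theorem mainTheorem1:
  fixes n d :: nat and m :: int and \<epsilon> \<Delta> :: real
    and v v' :: "nat \<Rightarrow> nat \<Rightarrow> int" and S :: "(nat \<Rightarrow> int) set"
  assumes "n \<ge> 1" and "d \<ge> 1" and "m \<ge> 2" and "\<epsilon> > 0" and "\<Delta> > 0"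
    and "neighboring n d \<Delta> v v'"
  shows "measure_pmf.prob (secagg_mech n d m (1 / real n) (exp (- \<epsilon> / \<Delta>)) v) S
         \<le> exp \<epsilon> * measure_pmf.prob (secagg_mech n d m (1 / real n) (exp (- \<epsilon> / \<Delta>)) v') S"
proof -
  define t where "t = \<epsilon> / \<Delta>"
  have t: "t > 0" and beta: "exp (- \<epsilon> / \<Delta>) = exp (- t)"
    using assms by (simp_all add: t_def)
  let ?s = "\<lambda>w k. \<Sum>i<n. (w :: nat \<Rightarrow> nat \<Rightarrow> int) i k"
  let ?M = "\<lambda>w. Pi_pmf {..<d} 0 (\<lambda>k. map_pmf (\<lambda>z. (?s w k + z) mod m) (discrete_laplace_pmf (exp (- t))))"
  have mech: "secagg_mech n d m (1 / real n) (exp (- t)) w = ?M w" for w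
    using assms(1) t by (intro secagg_mech_eq_Pi_pmf) auto
  have "t * (\<Sum>k<d. \<bar>real_of_int (?s v k - ?s v' k)\<bar>) \<le> t * \<Delta>"
    using neighboring_column_sums_dist[OF assms(6)] t by (intro mult_left_mono) auto
  then have factor: "(\<Prod>k<d. exp (t * \<bar>real_of_int (?s v k - ?s v' k)\<bar>)) \<le> exp \<epsilon>"
    using assms(5) by (simp add: exp_sum[symmetric] sum_distrib_left t_def)
  have "pmf (?M v) F \<le> exp \<epsilon> * pmf (?M v') F" for F
  proof -
    have "pmf (?M v) F \<le> (\<Prod>k<d. exp (t * \<bar>real_of_int (?s v k - ?s v' k)\<bar>)) * pmf (?M v') F"
      by (intro pmf_Pi_pmf_le_if_pmf_le pmf_shifted_mod_le t) auto
    also have "\<dots> \<le> exp \<epsilon> * pmf (?M v') F"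
      using factor by (intro mult_right_mono) auto
    finally show ?thesis .
  qed
  then show ?thesis
    unfolding beta mech by (intro prob_le_if_pmf_le) auto
qed

end
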